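(* Let $n\ge1$, $L>0$, $\mu\in(0,1)$ and $\eta>4\mu n^2$. Let $p\in\{0,\dots,n-1\}$ and $x\in E_p$. Then $\nabla f_\mu(x)$, $\nabla h_\mu(x)$ and $\nabla h_\mu^*(x)$ all belong to $E_{p+1}$.
   Context: $(e_1,\dots,e_n)$ is the canonical basis, $E_p=\operatorname{Span}(e_1,\dots,e_p)$, $E_0=\{0\}$. Let $x_*=(1+\eta,1+\frac\eta2,\dots,1+\frac\eta n)$, $\hat f(x)=\|x-x_*\|_\infty$, $f_\mu(x)=\min_{u\in\mathbb{R}^n}\hat f(u)+\frac1{2\mu}\|x-u\|^2$ (Euclidean norm). Let $\phi_\mu:\mathbb{R}\to\mathbb{R}$, $\phi_\mu(t)=t-\mu/2$ if $t\ge\mu$ and $\phi_\mu(t)=t^2/(2\mu)$ otherwise; $d_\mu(x)=\frac\mu2\|x\|^2+\sum_{i=1}^n\phi_\mu(x^{(i)})$; and $h_\mu=\frac1L(f_\mu+d_\mu)$. $h_\mu^*$ denotes the convex conjugate of $h_\mu$, $h_\mu^*(y)=\sup_u\langle u,y\rangle-h_\mu(u)$, whose gradient is the inverse of $\nabla h_\mu$. *)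

theory Defs
  imports "HOL-Analysis.Analysis"
begin

text \<open>R^n is modelled as real^'n with 'n a finite linearly ordered index type;
  n = CARD('n). The coordinate i is the (pos i + 1)-th coordinate, where pos i
  counts the indices strictly below i (0-based position).\<close>

definition pos :: "'n::{finite,linorder} \<Rightarrow> nat" where
  "pos i = card {j. j < i}"

text \<open>E_p = Span(e_1,...,e_p): vectors whose coordinates at positions \<ge> p vanish.\<close>
definition Esp :: "nat \<Rightarrow> (real^'n::{finite,linorder}) set" where
  "Esp p = {x. \<forall>i. p \<le> pos i \<longrightarrow> x $ i = 0}"

definition xstar :: "real \<Rightarrow> real^'n::{finite,linorder}" where
  "xstar \<eta> = (\<chi> i. 1 + \<eta> / real (pos i + 1))"

definition fhat :: "real \<Rightarrow> real^'n::{finite,linorder} \<Rightarrow> real" where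
  "fhat \<eta> x = infnorm (x - xstar \<eta>)"

definition fmu :: "real \<Rightarrow> real \<Rightarrow> real^'n::{finite,linorder} \<Rightarrow> real" where
  "fmu \<eta> \<mu> x = (INF u. fhat \<eta> u + (1 / (2 * \<mu>)) * (norm (x - u))^2)"

definition phimu :: "real \<Rightarrow> real \<Rightarrow> real" where
  "phimu \<mu> t = (if t \<ge> \<mu> then t - \<mu> / 2 else t^2 / (2 * \<mu>))"

definition dmu :: "real \<Rightarrow> real^'n::{finite,linorder} \<Rightarrow> real" where
  "dmu \<mu> x = \<mu> / 2 * (norm x)^2 + (\<Sum>i\<in>UNIV. phimu \<mu> (x $ i))"

definition hmu :: "real \<Rightarrow> real \<Rightarrow> real \<Rightarrow> real^'n::{finite,linorder} \<Rightarrow> real" where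
  "hmu L \<eta> \<mu> x = (1 / L) * (fmu \<eta> \<mu> x + dmu \<mu> x)"

definition convex_conj :: "('a::real_inner \<Rightarrow> real) \<Rightarrow> 'a \<Rightarrow> real" where
  "convex_conj h y = (SUP u. inner u y - h u)"

definition has_gradient :: "('a::real_inner \<Rightarrow> real) \<Rightarrow> 'a \<Rightarrow> 'a \<Rightarrow> bool" where
  "has_gradient f g x \<longleftrightarrow> (f has_derivative (\<lambda>h. inner g h)) (at x)"

end

theory Submission
  imports Defs
begin

text \<open>
  \<open>f\<^sub>\<mu>\<close> is the Moreau envelope of \<open>f = \<parallel>\<cdot> - x\<^sub>*\<parallel>\<^sub>\<infinity>\<close>, so \<open>\<nabla>f\<^sub>\<mu>(x) = (x - w) / \<mu>\<close>
  for the proximal point \<open>w\<close> of \<open>x\<close>; and \<open>\<nabla>d\<^sub>\<mu>\<close> acts coordinatewise with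
  \<open>\<phi>\<^sub>\<mu>'(0) = 0\<close>. Let \<open>x \<in> E\<^sub>p\<close>. The proximal point never exceeds \<open>x\<close> by more than
  \<open>\<mu>\<close> in any coordinate, so its \<open>(p+1)\<close>-st coordinate is at most \<open>\<mu>\<close>, while
  \<open>\<eta> > 4\<mu>n\<^sup>2\<close> makes every later coordinate of \<open>x\<^sub>*\<close> at least \<open>2\<mu>\<close> smaller than the
  \<open>(p+1)\<close>-st. Hence \<open>\<parallel>w - x\<^sub>*\<parallel>\<^sub>\<infinity>\<close> dominates those later coordinates of \<open>x\<^sub>*\<close>, and
  setting a later coordinate of \<open>w\<close> to \<open>0\<close> does not increase \<open>f(w)\<close> but decreases
  \<open>\<parallel>x - w\<parallel>\<^sup>2\<close> unless that coordinate already vanishes: \<open>w \<in> E\<^sub>p\<^sub>+\<^sub>1\<close>.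

  \<open>\<nabla>h\<^sub>\<mu>\<^sup>*(x)\<close> is the minimiser \<open>u\<close> of \<open>h\<^sub>\<mu> - \<langle>x, \<cdot>\<rangle>\<close>, which is \<open>\<mu>/L\<close>-strongly convex;
  quadratic growth around \<open>u\<close> makes \<open>h\<^sub>\<mu>\<^sup>*\<close> differentiable at \<open>x\<close>. The pair \<open>(u, w)\<close>, with
  \<open>w\<close> the proximal point of \<open>u\<close>, minimises the joint objective, and two perturbations
  of both points show \<open>u \<in> E\<^sub>p\<^sub>+\<^sub>1\<close>: lowering a coordinate \<open>u\<^sub>i > \<mu>\<close> with \<open>x\<^sub>i = 0\<close> to
  \<open>\<mu>\<close> would strictly decrease the objective, and after that the argument above allows
  zeroing the later coordinates.
\<close>

lemma has_gradient_if_quadratic_bound: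
  fixes f :: "'a::real_inner \<Rightarrow> real"
  assumes bound: "\<And>k. \<bar>f (x + k) - f x - inner g k\<bar> \<le> C * (norm k)\<^sup>2"
  shows "has_gradient f g x"
  unfolding has_gradient_def has_derivative_at_alt
proof (intro conjI allI impI bounded_linear_inner_right)
  fix \<epsilon> :: real assume "\<epsilon> > 0"
  show "\<exists>d>0. \<forall>y. norm (y - x) < d \<longrightarrow> norm (f y - f x - inner g (y - x)) \<le> \<epsilon> * norm (y - x)"
  proof (intro exI[of _ "\<epsilon> / (\<bar>C\<bar> + 1)"] conjI allI impI)
    show "\<epsilon> / (\<bar>C\<bar> + 1) > 0" using \<open>\<epsilon> > 0\<close> by simp
    fix y assume y: "norm (y - x) < \<epsilon> / (\<bar>C\<bar> + 1)"
    have "norm (f y - f x - inner g (y - x)) \<le> \<bar>C\<bar> * norm (y - x) * norm (y - x)"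
      using bound[of "y - x"] mult_right_mono[OF abs_ge_self[of C], of "(norm (y - x))\<^sup>2"]
      by (simp add: power2_eq_square mult.assoc)
    also have "\<dots> \<le> \<epsilon> * norm (y - x)"
    proof (intro mult_right_mono)
      have "(\<bar>C\<bar> + 1) * norm (y - x) < \<epsilon>"
        using y by (simp add: field_simps)
      moreover have "\<bar>C\<bar> * norm (y - x) \<le> (\<bar>C\<bar> + 1) * norm (y - x)"
        by (simp add: mult_right_mono)
      ultimately show "\<bar>C\<bar> * norm (y - x) \<le> \<epsilon>"
        by linarith
    qed simp
    finally show "norm (f y - f x - inner g (y - x)) \<le> \<epsilon> * norm (y - x)" .
  qed
qed

lemma convex_on_quadratic_lower_bound:
  fixes f :: "'a::real_inner \<Rightarrow> real"
  assumes "convex_on UNIV f" and upper: "\<And>k. f (x + k) \<le> f x + inner g k + C * (norm k)\<^sup>2"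
  shows "f x + inner g k - C * (norm k)\<^sup>2 \<le> f (x + k)"
proof -
  have "x = (1 - 1/2) *\<^sub>R (x + k) + (1/2) *\<^sub>R (x - k)"
    by (simp add: scaleR_add_right scaleR_diff_right flip: scaleR_add_left)
  then have "f x \<le> (1/2) * f (x + k) + (1/2) * f (x - k)"
    using convex_onD[OF assms(1), of "1/2" "x + k" "x - k"] by simp
  moreover have "f (x - k) \<le> f x - inner g k + C * (norm k)\<^sup>2"
    using upper[of "-k"] by simp
  ultimately show ?thesis by simp
qed

lemma convex_on_if_above_tangents:
  fixes f :: "'a::real_inner \<Rightarrow> real"
  assumes tangent: "\<And>x y. f x + inner (g x) (y - x) \<le> f y"
  shows "convex_on UNIV f"
proof (rule convex_onI)
  fix t :: real and x y :: 'a
  define z where "z = (1 - t) *\<^sub>R x + t *\<^sub>R y"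
  have zero: "(1 - t) * inner (g z) (x - z) + t * inner (g z) (y - z) = 0"
    by (simp add: z_def inner_diff_right inner_add_right algebra_simps)
  assume "0 < t" "t < 1"
  then have "(1 - t) * (f z + inner (g z) (x - z)) + t * (f z + inner (g z) (y - z)) \<le> (1 - t) * f x + t * f y"
    by (intro add_mono mult_left_mono tangent) auto
  with zero show "f z \<le> (1 - t) * f x + t * f y"
    by (simp add: algebra_simps)
qed simp

lemma norm_convex_combination_sq:
  fixes a b :: "'a::real_inner"
  shows "(norm ((1 - t) *\<^sub>R a + t *\<^sub>R b))\<^sup>2
    = (1 - t) * (norm a)\<^sup>2 + t * (norm b)\<^sup>2 - t * (1 - t) * (norm (a - b))\<^sup>2"
  unfolding power2_norm_eq_inner
  by (simp add: inner_simps inner_commute algebra_simps power2_eq_square)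

lemma quadratic_growth_at_minimum:
  fixes F :: "'a::real_inner \<Rightarrow> real"
  assumes convex: "convex_on UNIV (\<lambda>u. F u - m/2 * (norm u)\<^sup>2)" and min: "\<And>u. F u0 \<le> F u"
  shows "F u0 + m/2 * (norm (u - u0))\<^sup>2 \<le> F u"
proof -
  let ?G = "\<lambda>u. F u - m/2 * (norm u)\<^sup>2"
  have "F u0 + (1 - t) * (m/2 * (norm (u - u0))\<^sup>2) \<le> F u" if t: "0 < t" "t < 1" for t
  proof -
    let ?z = "(1 - t) *\<^sub>R u0 + t *\<^sub>R u"
    have "F u0 \<le> ?G ?z + m/2 * (norm ?z)\<^sup>2"
      using min[of ?z] by simp
    also have "\<dots> \<le> (1 - t) * ?G u0 + t * ?G u + m/2 * (norm ?z)\<^sup>2"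
      using convex_onD[OF convex, of t u0 u] t by simp
    also have "\<dots> = (1 - t) * F u0 + t * F u - t * ((1 - t) * (m/2 * (norm (u - u0))\<^sup>2))"
      unfolding norm_convex_combination_sq by (simp add: norm_minus_commute field_simps)
    finally have "t * (F u0 + (1 - t) * (m/2 * (norm (u - u0))\<^sup>2)) \<le> t * F u"
      by (simp add: algebra_simps)
    then show ?thesis using t by simp
  qed
  then have "\<forall>\<^sub>F t in at_right 0. F u0 + (1 - t) * (m/2 * (norm (u - u0))\<^sup>2) \<le> F u"
    using eventually_at_right_real[of 0 1] by (auto elim: eventually_mono)
  moreover have "((\<lambda>t. F u0 + (1 - t) * (m/2 * (norm (u - u0))\<^sup>2)) \<longlongrightarrow> F u0 + (1 - 0) * (m/2 * (norm (u - u0))\<^sup>2)) (at_right 0)"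
    by (intro tendsto_intros)
  ultimately show ?thesis
    using tendsto_upperbound by fastforce
qed

lemma inner_le_quadratic:
  fixes v k :: "'a::real_inner"
  assumes "0 < m"
  shows "inner v k \<le> m/2 * (norm v)\<^sup>2 + 1/(2*m) * (norm k)\<^sup>2"
proof -
  have "0 \<le> (norm (m *\<^sub>R v - k))\<^sup>2 / (2*m)"
    using assms by simp
  also have "\<dots> = m/2 * (norm v)\<^sup>2 + 1/(2*m) * (norm k)\<^sup>2 - inner v k"
    unfolding power2_norm_eq_inner using assms
    by (simp add: inner_simps inner_commute power2_eq_square field_simps)
  finally show ?thesis by simp
qed

lemma has_gradient_convex_conj:
  fixes h :: "'a::real_inner \<Rightarrow> real"
  assumes m: "0 < m" and growth: "\<And>u. h u0 + inner y0 (u - u0) + m/2 * (norm (u - u0))\<^sup>2 \<le> h u"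
  shows "has_gradient (convex_conj h) u0 y0"
proof (rule has_gradient_if_quadratic_bound[where C = "1/(2*m)"])
  define c where "c = inner u0 y0 - h u0"
  have upper: "inner u y - h u \<le> c + inner u0 (y - y0) + 1/(2*m) * (norm (y - y0))\<^sup>2" for u y
    using growth[of u] inner_le_quadratic[OF m, of "u - u0" "y - y0"]
    by (simp add: c_def inner_diff_left inner_diff_right inner_commute)
  have bdd: "bdd_above (range (\<lambda>u. inner u y - h u))" for y
    using upper by (intro bdd_aboveI2)
  have lower: "inner u0 y - h u0 \<le> convex_conj h y" for y
    unfolding convex_conj_def by (rule cSUP_upper[OF UNIV_I bdd])
  have upper_conj: "convex_conj h y \<le> c + inner u0 (y - y0) + 1/(2*m) * (norm (y - y0))\<^sup>2" for y
    unfolding convex_conj_def by (rule cSUP_least) (use upper in auto)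
  from upper_conj[of y0] lower[of y0] have "convex_conj h y0 = c"
    by (simp add: c_def)
  fix k
  show "\<bar>convex_conj h (y0 + k) - convex_conj h y0 - inner u0 k\<bar> \<le> 1/(2*m) * (norm k)\<^sup>2"
    using \<open>convex_conj h y0 = c\<close> lower[of "y0 + k"] upper_conj[of "y0 + k"] m
    by (simp add: c_def inner_add_right abs_le_iff)
qed

lemma continuous_attains_min_if_coercive:
  fixes f :: "'a::heine_borel \<Rightarrow> real"
  assumes cont: "continuous_on UNIV f" and coercive: "\<And>y. R < dist a y \<Longrightarrow> f a < f y"
  shows "\<exists>z. \<forall>y. f z \<le> f y"
proof -
  have "a \<in> cball a R"
    using coercive[of a] by force
  then obtain z where z: "z \<in> cball a R" "\<forall>y\<in>cball a R. f z \<le> f y"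
    using continuous_attains_inf[OF compact_cball _ continuous_on_subset[OF cont]] by blast
  have "f z \<le> f y" for y
  proof (cases "y \<in> cball a R")
    case False
    then have "f a < f y"
      by (intro coercive) (simp add: not_le)
    moreover have "f z \<le> f a"
      using z(2) \<open>a \<in> cball a R\<close> by blast
    ultimately show ?thesis by simp
  qed (use z in blast)
  then show ?thesis by blast
qed

lemma quadratic_dominates_affine:
  fixes a b c :: real
  assumes "0 < a"
  shows "\<exists>R. \<forall>r. R < r \<longrightarrow> b * r + c < a * r\<^sup>2"
proof (intro exI allI impI)
  fix r assume r: "(\<bar>b\<bar> + \<bar>c\<bar> + 1) / a + 1 < r"
  moreover have "0 < (\<bar>b\<bar> + \<bar>c\<bar> + 1) / a"
    using assms by simp
  ultimately have "1 < r"
    by linarith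
  have "(\<bar>b\<bar> + \<bar>c\<bar> + 1) / a < r"
    using r by linarith
  then have "\<bar>b\<bar> + \<bar>c\<bar> + 1 < a * r"
    using assms by (simp add: divide_less_eq mult.commute)
  then have "(\<bar>b\<bar> + \<bar>c\<bar> + 1) * r < a * r * r"
    using \<open>1 < r\<close> by (intro mult_strict_right_mono) simp_all
  moreover have "b * r \<le> \<bar>b\<bar> * r" and "c \<le> \<bar>c\<bar> * r"
    using \<open>1 < r\<close> by (simp_all add: mult_right_mono) (smt (verit) mult_le_cancel_left1)
  moreover have "(\<bar>b\<bar> + \<bar>c\<bar> + 1) * r = \<bar>b\<bar> * r + \<bar>c\<bar> * r + r"
    by (simp add: distrib_right)
  ultimately have "b * r + c < a * r * r"
    using \<open>1 < r\<close> by linarith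
  then show "b * r + c < a * r\<^sup>2"
    by (simp add: power2_eq_square)
qed

lemma pos_less_card: "pos (i::'n::{finite,linorder}) < CARD('n)"
  unfolding pos_def by (rule psubset_card_mono) auto

lemma strict_mono_pos: "strict_mono (pos :: 'n::{finite,linorder} \<Rightarrow> nat)"
  unfolding pos_def by (intro strict_monoI psubset_card_mono) (auto intro: less_trans)

lemma range_pos: "range (pos :: 'n::{finite,linorder} \<Rightarrow> nat) = {..<CARD('n)}"
proof (rule card_subset_eq)
  show "range (pos :: 'n \<Rightarrow> nat) \<subseteq> {..<CARD('n)}"
    using pos_less_card by auto
  show "card (range (pos :: 'n \<Rightarrow> nat)) = card {..<CARD('n)}"
    using card_image[OF strict_mono_on_imp_inj_on[OF strict_mono_pos]] by simp
qed simp

lemma subspace_Esp: "subspace (Esp p)"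
  by (simp add: Esp_def subspace_def)

lemma Esp_mono: "p \<le> q \<Longrightarrow> Esp p \<subseteq> Esp q"
  by (auto simp: Esp_def)

lemma xstar_component: "xstar \<eta> $ i = 1 + \<eta> / (real (pos i) + 1)"
  by (simp add: xstar_def)

lemma xstar_component_nonneg: "0 \<le> \<eta> \<Longrightarrow> 0 \<le> xstar \<eta> $ i"
  by (simp add: xstar_component)

text \<open>The only place where the lower bound on \<open>\<eta>\<close> enters: the \<open>k\<close>-th and \<open>(k+1)\<close>-st
  coordinates of \<open>x\<^sub>*\<close> differ by \<open>\<eta> / (k (k + 1)) \<ge> \<eta> / n\<^sup>2 > 4 \<mu>\<close>.\<close>
lemma xstar_gap:
  fixes i j :: "'n::{finite,linorder}"
  assumes "0 < \<mu>" and eta: "4 * \<mu> * (real CARD('n))\<^sup>2 < \<eta>" and ij: "pos i < pos j"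
  shows "xstar \<eta> $ j + 2 * \<mu> \<le> xstar \<eta> $ i"
proof -
  define N where "N = real CARD('n)"
  define a where "a = real (pos i) + 1"
  define b where "b = real (pos j) + 1"
  have "0 \<le> 4 * \<mu> * (real CARD('n))\<^sup>2"
    using \<open>0 < \<mu>\<close> by simp
  then have "0 < \<eta>"
    using eta by linarith
  have "0 < a" "a + 1 \<le> b" "b \<le> N" "0 < N"
    using ij pos_less_card[of j] by (auto simp: a_def b_def N_def)
  then have "a * (a + 1) \<le> N * N"
    by (intro mult_mono) auto
  then have "\<eta> / (N * N) \<le> \<eta> / (a * (a + 1))"
    using \<open>0 < \<eta>\<close> \<open>0 < a\<close> \<open>0 < N\<close> by (intro divide_left_mono) auto
  moreover have "4 * \<mu> < \<eta> / (N * N)"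
    using eta by (simp add: N_def field_simps power2_eq_square)
  moreover have "\<eta> / b \<le> \<eta> / (a + 1)"
    using \<open>a + 1 \<le> b\<close> \<open>0 < a\<close> \<open>0 < \<eta>\<close> by (intro divide_left_mono) auto
  moreover have "\<eta> / a - \<eta> / (a + 1) = \<eta> / (a * (a + 1))"
    using \<open>0 < a\<close> by (simp add: field_simps)
  ultimately show ?thesis
    using \<open>0 < \<mu>\<close> by (simp add: xstar_component flip: a_def b_def)
qed

definition dphi :: "real \<Rightarrow> real \<Rightarrow> real" where
  "dphi \<mu> t = (if \<mu> \<le> t then 1 else t / \<mu>)"

lemma phimu_nonneg: "0 < \<mu> \<Longrightarrow> 0 \<le> phimu \<mu> t"
  by (auto simp: phimu_def)

lemma phimu_above_tangent:
  assumes "0 < \<mu>"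
  shows "phimu \<mu> t + dphi \<mu> t * s \<le> phimu \<mu> (t + s)"
proof (cases "\<mu> \<le> t"; cases "\<mu> \<le> t + s")
  assume "\<mu> \<le> t" "\<not> \<mu> \<le> t + s"
  have "0 \<le> (t + s - \<mu>)\<^sup>2"
    by simp
  with \<open>\<mu> \<le> t\<close> \<open>\<not> \<mu> \<le> t + s\<close> show ?thesis
    using assms by (simp add: phimu_def dphi_def field_simps power2_eq_square)
next
  assume "\<not> \<mu> \<le> t" "\<mu> \<le> t + s"
  then have "0 \<le> (\<mu> - t) * (2 * (t + s) - \<mu> - t)"
    by simp
  with \<open>\<not> \<mu> \<le> t\<close> \<open>\<mu> \<le> t + s\<close> show ?thesis
    using assms by (simp add: phimu_def dphi_def field_simps power2_eq_square)
next
  assume "\<not> \<mu> \<le> t" "\<not> \<mu> \<le> t + s"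
  have "0 \<le> s\<^sup>2"
    by simp
  with \<open>\<not> \<mu> \<le> t\<close> \<open>\<not> \<mu> \<le> t + s\<close> show ?thesis
    using assms by (simp add: phimu_def dphi_def field_simps power2_eq_square)
qed (simp add: phimu_def dphi_def)

lemma phimu_below_quadratic:
  assumes "0 < \<mu>"
  shows "phimu \<mu> (t + s) \<le> phimu \<mu> t + dphi \<mu> t * s + s\<^sup>2 / (2 * \<mu>)"
proof (cases "\<mu> \<le> t"; cases "\<mu> \<le> t + s")
  assume "\<mu> \<le> t" "\<mu> \<le> t + s"
  then show ?thesis
    using assms by (simp add: phimu_def dphi_def)
next
  assume "\<mu> \<le> t" "\<not> \<mu> \<le> t + s"
  then have "0 \<le> \<mu> * ((\<mu> - t) * (2 * s + t - \<mu>))"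
    using assms by (intro mult_nonneg_nonneg mult_nonpos_nonpos) auto
  with \<open>\<mu> \<le> t\<close> \<open>\<not> \<mu> \<le> t + s\<close> show ?thesis
    using assms by (simp add: phimu_def dphi_def field_simps power2_eq_square)
next
  assume "\<not> \<mu> \<le> t" "\<mu> \<le> t + s"
  have "0 \<le> (t + s - \<mu>)\<^sup>2"
    by simp
  with \<open>\<not> \<mu> \<le> t\<close> \<open>\<mu> \<le> t + s\<close> show ?thesis
    using assms by (simp add: phimu_def dphi_def field_simps power2_eq_square)
qed (use assms in \<open>simp add: phimu_def dphi_def field_simps power2_eq_square\<close>)

lemma power2_norm_add:
  fixes x y :: "'a::real_inner"
  shows "(norm (x + y))\<^sup>2 = (norm x)\<^sup>2 + 2 * inner x y + (norm y)\<^sup>2"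
  unfolding power2_norm_eq_inner by (simp add: inner_simps inner_commute)

lemma power2_norm_vec: "(norm (k :: real^'n))\<^sup>2 = (\<Sum>i\<in>UNIV. (k $ i)\<^sup>2)"
  unfolding power2_norm_eq_inner by (simp add: inner_vec_def power2_eq_square)

lemma power2_norm_diff_axis:
  "(norm (v - c *\<^sub>R axis i 1))\<^sup>2 = (norm (v :: real^'n))\<^sup>2 - 2 * c * v $ i + c\<^sup>2"
  using power2_norm_add[of v "- c *\<^sub>R axis i 1"] by (simp add: inner_axis)

definition phisum :: "real \<Rightarrow> real^'n \<Rightarrow> real" where
  "phisum \<mu> u = (\<Sum>i\<in>UNIV. phimu \<mu> (u $ i))"

definition grad_phisum :: "real \<Rightarrow> real^'n \<Rightarrow> real^'n" where
  "grad_phisum \<mu> u = (\<chi> i. dphi \<mu> (u $ i))"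

lemma inner_grad_phisum: "inner (grad_phisum \<mu> u) k = (\<Sum>i\<in>UNIV. dphi \<mu> (u $ i) * k $ i)"
  by (simp add: grad_phisum_def inner_vec_def)

lemma phisum_nonneg: "0 < \<mu> \<Longrightarrow> 0 \<le> phisum \<mu> u"
  unfolding phisum_def by (intro sum_nonneg phimu_nonneg)

lemma phisum_above_tangent:
  "0 < \<mu> \<Longrightarrow> phisum \<mu> u + inner (grad_phisum \<mu> u) k \<le> phisum \<mu> (u + k)"
  unfolding phisum_def inner_grad_phisum
  by (simp add: phimu_above_tangent sum_mono flip: sum.distrib)

lemma phisum_below_quadratic:
  "0 < \<mu> \<Longrightarrow> phisum \<mu> (u + k) \<le> phisum \<mu> u + inner (grad_phisum \<mu> u) k + (norm k)\<^sup>2 / (2 * \<mu>)"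
  unfolding phisum_def inner_grad_phisum power2_norm_vec sum_divide_distrib
  by (simp add: phimu_below_quadratic sum_mono flip: sum.distrib)

lemma convex_phisum:
  assumes "0 < \<mu>"
  shows "convex_on UNIV (phisum \<mu>)"
proof (rule convex_on_if_above_tangents)
  fix x y :: "real^'n"
  show "phisum \<mu> x + inner (grad_phisum \<mu> x) (y - x) \<le> phisum \<mu> y"
    using phisum_above_tangent[OF assms, of x "y - x"] by simp
qed

lemma dmu_eq_phisum: "dmu \<mu> u = \<mu> / 2 * (norm u)\<^sup>2 + phisum \<mu> u"
  by (simp add: dmu_def phisum_def)

definition grad_dmu :: "real \<Rightarrow> real^'n \<Rightarrow> real^'n" where
  "grad_dmu \<mu> u = \<mu> *\<^sub>R u + grad_phisum \<mu> u"

lemma has_gradient_dmu: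
  assumes "0 < \<mu>"
  shows "has_gradient (dmu \<mu>) (grad_dmu \<mu> u) u"
proof (rule has_gradient_if_quadratic_bound[where C = "\<mu> / 2 + 1 / (2 * \<mu>)"])
  fix k
  define D where "D = phisum \<mu> (u + k) - phisum \<mu> u - inner (grad_phisum \<mu> u) k"
  have "0 \<le> D" "D \<le> (norm k)\<^sup>2 / (2 * \<mu>)"
    using phisum_above_tangent[OF assms, of u k] phisum_below_quadratic[OF assms, of u k]
    by (simp_all add: D_def)
  moreover have "dmu \<mu> (u + k) - dmu \<mu> u - inner (grad_dmu \<mu> u) k = \<mu> / 2 * (norm k)\<^sup>2 + D"
    by (simp add: D_def dmu_eq_phisum grad_dmu_def power2_norm_add inner_add_left inner_commute algebra_simps)
  moreover have "0 \<le> \<mu> / 2 * (norm k)\<^sup>2"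
    using assms by simp
  ultimately show "\<bar>dmu \<mu> (u + k) - dmu \<mu> u - inner (grad_dmu \<mu> u) k\<bar> \<le> (\<mu> / 2 + 1 / (2 * \<mu>)) * (norm k)\<^sup>2"
    by (simp add: distrib_right)
qed

lemma grad_dmu_in_Esp: "0 < \<mu> \<Longrightarrow> u \<in> Esp p \<Longrightarrow> grad_dmu \<mu> u \<in> Esp p"
  by (auto simp: Esp_def grad_dmu_def grad_phisum_def dphi_def)

lemma dmu_diff_axis:
  fixes u :: "real^'n::{finite,linorder}"
  shows "dmu \<mu> (u - c *\<^sub>R axis i 1)
    = dmu \<mu> u - \<mu> / 2 * (2 * c * u $ i - c\<^sup>2) + phimu \<mu> (u $ i - c) - phimu \<mu> (u $ i)"
proof -
  have sum_eq: "(\<Sum>k\<in>UNIV. phimu \<mu> ((u - c *\<^sub>R axis i 1) $ k))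
    = (\<Sum>k\<in>UNIV. phimu \<mu> (u $ k) + (if k = i then phimu \<mu> (u $ i - c) - phimu \<mu> (u $ i) else 0))"
    by (rule sum.cong) (auto simp: axis_def)
  show ?thesis
    unfolding dmu_def power2_norm_diff_axis sum_eq by (simp add: sum.distrib algebra_simps)
qed

lemma dmu_lower_component:
  assumes "0 < \<mu>" and "\<mu> < u $ i"
  shows "dmu \<mu> (u - (u $ i - \<mu>) *\<^sub>R axis i 1) + (u $ i - \<mu>) < dmu \<mu> u"
proof -
  let ?c = "u $ i - \<mu>"
  have "0 < \<mu> / 2 * (?c * (u $ i + \<mu>))"
    using assms by simp
  moreover have "phimu \<mu> (u $ i - ?c) = \<mu> / 2" and "phimu \<mu> (u $ i) = u $ i - \<mu> / 2"
    using assms by (simp_all add: phimu_def power2_eq_square)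
  ultimately show ?thesis
    unfolding dmu_diff_axis by (simp add: power2_eq_square algebra_simps)
qed

lemma dmu_zero_component:
  assumes "0 < \<mu>" and "u $ i \<noteq> 0"
  shows "dmu \<mu> (u - u $ i *\<^sub>R axis i 1) < dmu \<mu> u"
proof -
  have "0 < \<mu> / 2 * (u $ i)\<^sup>2"
    using assms by simp
  moreover have "phimu \<mu> (u $ i - u $ i) = 0"
    using assms by (simp add: phimu_def)
  ultimately show ?thesis
    unfolding dmu_diff_axis using phimu_nonneg[OF assms(1), of "u $ i"]
    by (simp add: power2_eq_square algebra_simps)
qed

definition moreau_obj :: "('a::real_normed_vector \<Rightarrow> real) \<Rightarrow> real \<Rightarrow> 'a \<Rightarrow> 'a \<Rightarrow> real" where
  "moreau_obj g \<mu> u w = g w + 1 / (2 * \<mu>) * (norm (u - w))\<^sup>2"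

definition moreau_env :: "('a::real_normed_vector \<Rightarrow> real) \<Rightarrow> real \<Rightarrow> 'a \<Rightarrow> real" where
  "moreau_env g \<mu> u = (INF w. moreau_obj g \<mu> u w)"

definition is_prox :: "('a::real_normed_vector \<Rightarrow> real) \<Rightarrow> real \<Rightarrow> 'a \<Rightarrow> 'a \<Rightarrow> bool" where
  "is_prox g \<mu> u w \<longleftrightarrow> (\<forall>w'. moreau_obj g \<mu> u w \<le> moreau_obj g \<mu> u w')"

lemma fmu_eq_moreau_env: "fmu \<eta> \<mu> = moreau_env (fhat \<eta>) \<mu>"
  by (simp add: fun_eq_iff fmu_def moreau_env_def moreau_obj_def)

locale moreau_envelope =
  fixes g :: "'a::euclidean_space \<Rightarrow> real" and \<mu> :: real
  assumes mu_pos: "0 < \<mu>" and nonneg: "\<And>w. 0 \<le> g w"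
    and continuous: "continuous_on UNIV g" and convex: "convex_on UNIV g"
begin

lemma obj_nonneg: "0 \<le> moreau_obj g \<mu> u w"
  using nonneg mu_pos by (simp add: moreau_obj_def)

lemma prox_exists: "\<exists>w. is_prox g \<mu> u w"
proof -
  have "continuous_on UNIV (moreau_obj g \<mu> u)"
    unfolding moreau_obj_def by (intro continuous_intros continuous)
  moreover have "moreau_obj g \<mu> u u < moreau_obj g \<mu> u w" if "sqrt (2 * \<mu> * g u) < dist u w" for w
  proof -
    have "(sqrt (2 * \<mu> * g u))\<^sup>2 < (dist u w)\<^sup>2"
      using that nonneg[of u] mu_pos by (intro power_strict_mono) auto
    then have "g u < 1 / (2 * \<mu>) * (norm (u - w))\<^sup>2"
      using nonneg[of u] mu_pos by (simp add: dist_norm field_simps)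
    then show ?thesis
      using nonneg[of w] by (simp add: moreau_obj_def)
  qed
  ultimately show ?thesis
    unfolding is_prox_def by (rule continuous_attains_min_if_coercive)
qed

lemma env_eq_obj: "is_prox g \<mu> u w \<Longrightarrow> moreau_env g \<mu> u = moreau_obj g \<mu> u w"
  unfolding moreau_env_def is_prox_def by (rule cInf_eq_minimum) auto

lemma env_le_obj: "moreau_env g \<mu> u \<le> moreau_obj g \<mu> u w"
  unfolding moreau_env_def by (rule cINF_lower) (auto intro: bdd_belowI2 obj_nonneg)

lemma env_nonneg: "0 \<le> moreau_env g \<mu> u"
  using prox_exists env_eq_obj obj_nonneg by metis

lemma env_upper_bound:
  assumes "is_prox g \<mu> u w"
  shows "moreau_env g \<mu> (u + k) \<le> moreau_env g \<mu> u + inner ((1 / \<mu>) *\<^sub>R (u - w)) k + 1 / (2 * \<mu>) * (norm k)\<^sup>2"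
proof -
  have "(norm (u + k - w))\<^sup>2 = (norm (u - w))\<^sup>2 + 2 * inner (u - w) k + (norm k)\<^sup>2"
    using power2_norm_add[of "u - w" k] by (simp add: algebra_simps)
  then have "moreau_obj g \<mu> (u + k) w = moreau_obj g \<mu> u w + inner ((1 / \<mu>) *\<^sub>R (u - w)) k + 1 / (2 * \<mu>) * (norm k)\<^sup>2"
    unfolding moreau_obj_def inner_scaleR_left using mu_pos by (simp add: field_simps)
  then show ?thesis
    using env_le_obj[of "u + k" w] env_eq_obj[OF assms] by simp
qed

lemma convex_env: "convex_on UNIV (moreau_env g \<mu>)"
proof (rule convex_onI)
  fix t :: real and a b :: 'a
  assume t: "0 < t" "t < 1"
  obtain wa wb where wa: "is_prox g \<mu> a wa" and wb: "is_prox g \<mu> b wb"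
    using prox_exists by metis
  have diff: "(1 - t) *\<^sub>R a + t *\<^sub>R b - ((1 - t) *\<^sub>R wa + t *\<^sub>R wb) = (1 - t) *\<^sub>R (a - wa) + t *\<^sub>R (b - wb)"
    by (simp add: algebra_simps)
  have "g ((1 - t) *\<^sub>R wa + t *\<^sub>R wb) \<le> (1 - t) * g wa + t * g wb"
    using convex_onD[OF convex, of t wa wb] t by simp
  moreover have "(norm ((1 - t) *\<^sub>R (a - wa) + t *\<^sub>R (b - wb)))\<^sup>2 \<le> (1 - t) * (norm (a - wa))\<^sup>2 + t * (norm (b - wb))\<^sup>2"
    unfolding norm_convex_combination_sq using t by simp
  then have "1 / (2 * \<mu>) * (norm ((1 - t) *\<^sub>R (a - wa) + t *\<^sub>R (b - wb)))\<^sup>2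
      \<le> 1 / (2 * \<mu>) * ((1 - t) * (norm (a - wa))\<^sup>2 + t * (norm (b - wb))\<^sup>2)"
    using mu_pos by (intro mult_left_mono) simp_all
  moreover have "(1 - t) * moreau_obj g \<mu> a wa + t * moreau_obj g \<mu> b wb
      = (1 - t) * g wa + t * g wb + 1 / (2 * \<mu>) * ((1 - t) * (norm (a - wa))\<^sup>2 + t * (norm (b - wb))\<^sup>2)"
    using mu_pos by (simp add: moreau_obj_def field_simps)
  ultimately have "moreau_obj g \<mu> ((1 - t) *\<^sub>R a + t *\<^sub>R b) ((1 - t) *\<^sub>R wa + t *\<^sub>R wb)
      \<le> (1 - t) * moreau_obj g \<mu> a wa + t * moreau_obj g \<mu> b wb"
    unfolding moreau_obj_def diff by linarith
  then show "moreau_env g \<mu> ((1 - t) *\<^sub>R a + t *\<^sub>R b) \<le> (1 - t) * moreau_env g \<mu> a + t * moreau_env g \<mu> b"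
    using env_le_obj env_eq_obj[OF wa] env_eq_obj[OF wb] order_trans by metis
qed simp

lemma has_gradient_env:
  assumes "is_prox g \<mu> u w"
  shows "has_gradient (moreau_env g \<mu>) ((1 / \<mu>) *\<^sub>R (u - w)) u"
proof (rule has_gradient_if_quadratic_bound[where C = "1 / (2 * \<mu>)"])
  fix k
  show "\<bar>moreau_env g \<mu> (u + k) - moreau_env g \<mu> u - inner ((1 / \<mu>) *\<^sub>R (u - w)) k\<bar> \<le> 1 / (2 * \<mu>) * (norm k)\<^sup>2"
    using env_upper_bound[OF assms, of k]
      convex_on_quadratic_lower_bound[OF convex_env env_upper_bound[OF assms], of k]
    by (simp add: abs_le_iff)
qed

end

lemma moreau_envelope_fhat: "0 < \<mu> \<Longrightarrow> moreau_envelope (fhat \<eta>) \<mu>"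
proof unfold_locales
  show "continuous_on UNIV (fhat \<eta>)"
    unfolding fhat_def by (intro continuous_intros)
  show "convex_on UNIV (fhat \<eta>)"
  proof (rule convex_onI)
    fix t :: real and a b
    assume "0 < t" "t < 1"
    have "(1 - t) *\<^sub>R a + t *\<^sub>R b - xstar \<eta> = (1 - t) *\<^sub>R (a - xstar \<eta>) + t *\<^sub>R (b - xstar \<eta>)"
      by (simp add: algebra_simps)
    then show "fhat \<eta> ((1 - t) *\<^sub>R a + t *\<^sub>R b) \<le> (1 - t) * fhat \<eta> a + t * fhat \<eta> b"
      using infnorm_triangle[of "(1 - t) *\<^sub>R (a - xstar \<eta>)" "t *\<^sub>R (b - xstar \<eta>)"] \<open>0 < t\<close> \<open>t < 1\<close>
      by (simp add: fhat_def infnorm_mul)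
  qed simp
qed (simp_all add: fhat_def infnorm_pos_le)

lemma infnorm_cart_le: "(\<And>i. \<bar>v $ i\<bar> \<le> c) \<Longrightarrow> infnorm (v :: real^'n) \<le> c"
  unfolding infnorm_cart by (rule cSup_least) auto

lemma infnorm_diff_axis_le: "infnorm (v - c *\<^sub>R axis i 1) \<le> infnorm (v :: real^'n) + \<bar>c\<bar>"
  using infnorm_triangle[of v "- c *\<^sub>R axis i 1"] infnorm_le_norm[of "c *\<^sub>R axis i (1::real)"]
  by (simp add: infnorm_neg)

lemma prox_fhat_component_le:
  assumes "0 < \<mu>" and prox: "is_prox (fhat \<eta>) \<mu> u w"
  shows "w $ i \<le> u $ i + \<mu>"
proof (rule ccontr)
  define \<delta> where "\<delta> = w $ i - u $ i - \<mu>"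
  assume "\<not> w $ i \<le> u $ i + \<mu>"
  then have "0 < \<delta>"
    by (simp add: \<delta>_def)
  define w' where "w' = w - \<delta> *\<^sub>R axis i 1"
  have eq: "u - w' = (u - w) - (- \<delta>) *\<^sub>R axis i 1"
    by (simp add: w'_def)
  have norm_eq: "(norm (u - w'))\<^sup>2 = (norm (u - w))\<^sup>2 - (2 * \<mu> * \<delta> + \<delta>\<^sup>2)"
    unfolding eq power2_norm_diff_axis by (simp add: \<delta>_def power2_eq_square algebra_simps)
  have "fhat \<eta> w' \<le> fhat \<eta> w + \<delta>"
    using infnorm_diff_axis_le[of "w - xstar \<eta>" \<delta> i] \<open>0 < \<delta>\<close>
    by (simp add: fhat_def w'_def algebra_simps)
  moreover have "moreau_obj (fhat \<eta>) \<mu> u w' = fhat \<eta> w' + 1 / (2 * \<mu>) * (norm (u - w))\<^sup>2 - \<delta> - \<delta>\<^sup>2 / (2 * \<mu>)"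
    unfolding moreau_obj_def norm_eq using \<open>0 < \<mu>\<close> by (simp add: field_simps)
  moreover have "0 < \<delta>\<^sup>2 / (2 * \<mu>)"
    using \<open>0 < \<delta>\<close> \<open>0 < \<mu>\<close> by simp
  ultimately have "moreau_obj (fhat \<eta>) \<mu> u w' < moreau_obj (fhat \<eta>) \<mu> u w"
    unfolding moreau_obj_def[of _ _ u w] by linarith
  with prox show False
    by (simp add: is_prox_def not_le[symmetric])
qed

lemma moreau_obj_fhat_zero_component:
  assumes "0 < \<mu>" and "0 \<le> xstar \<eta> $ j" and "xstar \<eta> $ j \<le> fhat \<eta> w"
  shows "moreau_obj (fhat \<eta>) \<mu> (u - u $ j *\<^sub>R axis j 1) (w - w $ j *\<^sub>R axis j 1) + (u $ j - w $ j)\<^sup>2 / (2 * \<mu>)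
    \<le> moreau_obj (fhat \<eta>) \<mu> u w"
proof -
  have eq: "u - u $ j *\<^sub>R axis j 1 - (w - w $ j *\<^sub>R axis j 1) = (u - w) - (u - w) $ j *\<^sub>R axis j 1"
    by (simp add: algebra_simps)
  have norm_eq: "(norm (u - u $ j *\<^sub>R axis j 1 - (w - w $ j *\<^sub>R axis j 1)))\<^sup>2 = (norm (u - w))\<^sup>2 - (u $ j - w $ j)\<^sup>2"
    unfolding eq power2_norm_diff_axis by (simp add: power2_eq_square)
  have "fhat \<eta> (w - w $ j *\<^sub>R axis j 1) \<le> fhat \<eta> w"
    unfolding fhat_def
  proof (rule infnorm_cart_le)
    fix k
    show "\<bar>(w - w $ j *\<^sub>R axis j 1 - xstar \<eta>) $ k\<bar> \<le> infnorm (w - xstar \<eta>)"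
      using assms(2,3) component_le_infnorm_cart[of "w - xstar \<eta>" k]
      by (cases "k = j") (simp_all add: fhat_def axis_def)
  qed
  then show ?thesis
    unfolding moreau_obj_def norm_eq by (simp add: right_diff_distrib)
qed

text \<open>The prox point has \<open>w\<^sub>i \<le> u\<^sub>i + \<mu> \<le> 2 \<mu>\<close>, so \<open>fhat w \<ge> x\<^sub>*\<^sub>i - 2 \<mu> \<ge> x\<^sub>*\<^sub>j\<close>:
  zeroing the \<open>j\<close>-th coordinate of \<open>w\<close> cannot increase \<open>fhat\<close>.\<close>
lemma prox_fhat_zero_component:
  fixes i j :: "'n::{finite,linorder}"
  assumes "0 < \<mu>" and "4 * \<mu> * (real CARD('n))\<^sup>2 < \<eta>" and "pos i < pos j" and "u $ i \<le> \<mu>"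
    and prox: "is_prox (fhat \<eta>) \<mu> u w"
  shows "moreau_obj (fhat \<eta>) \<mu> (u - u $ j *\<^sub>R axis j 1) (w - w $ j *\<^sub>R axis j 1) + (u $ j - w $ j)\<^sup>2 / (2 * \<mu>)
    \<le> moreau_obj (fhat \<eta>) \<mu> u w"
proof (rule moreau_obj_fhat_zero_component)
  have "w $ i \<le> 2 * \<mu>"
    using prox_fhat_component_le[OF assms(1) prox, of i] assms(4) by simp
  moreover have "xstar \<eta> $ i - w $ i \<le> \<bar>(w - xstar \<eta>) $ i\<bar>"
    by (auto simp: abs_if)
  ultimately show "xstar \<eta> $ j \<le> fhat \<eta> w"
    unfolding fhat_def using xstar_gap[OF assms(1-3)] component_le_infnorm_cart[of "w - xstar \<eta>" i]
    by linarith
  have "0 \<le> 4 * \<mu> * (real CARD('n))\<^sup>2"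
    using assms(1) by simp
  then show "0 \<le> xstar \<eta> $ j"
    using assms(2) by (intro xstar_component_nonneg) linarith
qed fact

lemma prox_fhat_in_Esp:
  fixes u :: "real^'n::{finite,linorder}"
  assumes "0 < \<mu>" and "4 * \<mu> * (real CARD('n))\<^sup>2 < \<eta>" and "p < CARD('n)" and "u \<in> Esp p"
    and prox: "is_prox (fhat \<eta>) \<mu> u w"
  shows "w \<in> Esp (p + 1)"
  unfolding Esp_def
proof (intro CollectI allI impI, rule ccontr)
  fix j :: 'n assume "p + 1 \<le> pos j" and "w $ j \<noteq> 0"
  obtain i :: 'n where "pos i = p"
    using range_pos assms(3) by (metis imageE lessThan_iff)
  then have "u $ i = 0" "u $ j = 0"
    using \<open>u \<in> Esp p\<close> \<open>p + 1 \<le> pos j\<close> by (simp_all add: Esp_def)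
  have "moreau_obj (fhat \<eta>) \<mu> (u - u $ j *\<^sub>R axis j 1) (w - w $ j *\<^sub>R axis j 1) + (u $ j - w $ j)\<^sup>2 / (2 * \<mu>)
      \<le> moreau_obj (fhat \<eta>) \<mu> u w"
    by (rule prox_fhat_zero_component[where i = i, OF assms(1,2) _ _ prox])
      (use \<open>pos i = p\<close> \<open>p + 1 \<le> pos j\<close> \<open>u $ i = 0\<close> assms(1) in simp_all)
  moreover have "moreau_obj (fhat \<eta>) \<mu> u w \<le> moreau_obj (fhat \<eta>) \<mu> u (w - w $ j *\<^sub>R axis j 1)"
    using prox by (simp add: is_prox_def)
  moreover have "0 < (w $ j)\<^sup>2 / (2 * \<mu>)"
    using \<open>w $ j \<noteq> 0\<close> assms(1) by simp
  ultimately show False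
    using \<open>u $ j = 0\<close> by simp
qed

lemma argmin_prox_joint_min:
  assumes "0 < \<mu>"
    and min: "\<And>u. fmu \<eta> \<mu> u0 + dmu \<mu> u0 - inner y u0 \<le> fmu \<eta> \<mu> u + dmu \<mu> u - inner y u"
    and prox: "is_prox (fhat \<eta>) \<mu> u0 w0"
  shows "moreau_obj (fhat \<eta>) \<mu> u0 w0 + dmu \<mu> u0 - inner y u0 \<le> moreau_obj (fhat \<eta>) \<mu> u w + dmu \<mu> u - inner y u"
proof -
  interpret moreau_envelope "fhat \<eta>" \<mu>
    by (rule moreau_envelope_fhat[OF assms(1)])
  show ?thesis
    using min[of u] env_eq_obj[OF prox] env_le_obj[of u w] unfolding fmu_eq_moreau_env by linarith
qed

lemma argmin_component_le:
  fixes u0 y :: "real^'n::{finite,linorder}"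
  assumes "0 < \<mu>" and "y $ i = 0"
    and min: "\<And>u. fmu \<eta> \<mu> u0 + dmu \<mu> u0 - inner y u0 \<le> fmu \<eta> \<mu> u + dmu \<mu> u - inner y u"
  shows "u0 $ i \<le> \<mu>"
proof (rule ccontr)
  assume "\<not> u0 $ i \<le> \<mu>"
  define \<delta> where "\<delta> = u0 $ i - \<mu>"
  obtain w0 where prox: "is_prox (fhat \<eta>) \<mu> u0 w0"
    using moreau_envelope.prox_exists[OF moreau_envelope_fhat[OF assms(1)]] by blast
  let ?u = "u0 - \<delta> *\<^sub>R axis i 1" and ?w = "w0 - \<delta> *\<^sub>R axis i 1"
  have "moreau_obj (fhat \<eta>) \<mu> ?u ?w \<le> moreau_obj (fhat \<eta>) \<mu> u0 w0 + \<delta>"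
    using infnorm_diff_axis_le[of "w0 - xstar \<eta>" \<delta> i] \<open>\<not> u0 $ i \<le> \<mu>\<close>
    by (simp add: moreau_obj_def fhat_def \<delta>_def algebra_simps)
  moreover have "dmu \<mu> ?u + \<delta> < dmu \<mu> u0"
    using dmu_lower_component[OF assms(1), of u0 i] \<open>\<not> u0 $ i \<le> \<mu>\<close> by (simp add: \<delta>_def)
  moreover have "inner y ?u = inner y u0"
    using \<open>y $ i = 0\<close> by (simp add: inner_diff_right inner_axis)
  ultimately show False
    using argmin_prox_joint_min[OF assms(1) min prox, of ?u ?w] by linarith
qed

lemma argmin_in_Esp:
  fixes u0 y :: "real^'n::{finite,linorder}"
  assumes "0 < \<mu>" and "4 * \<mu> * (real CARD('n))\<^sup>2 < \<eta>" and "p < CARD('n)" and "y \<in> Esp p"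
    and min: "\<And>u. fmu \<eta> \<mu> u0 + dmu \<mu> u0 - inner y u0 \<le> fmu \<eta> \<mu> u + dmu \<mu> u - inner y u"
  shows "u0 \<in> Esp (p + 1)"
  unfolding Esp_def
proof (intro CollectI allI impI, rule ccontr)
  fix j :: 'n assume "p + 1 \<le> pos j" and "u0 $ j \<noteq> 0"
  obtain i :: 'n where "pos i = p"
    using range_pos assms(3) by (metis imageE lessThan_iff)
  have "u0 $ i \<le> \<mu>"
    by (rule argmin_component_le[OF assms(1) _ min]) (use \<open>y \<in> Esp p\<close> \<open>pos i = p\<close> in \<open>simp add: Esp_def\<close>)
  obtain w0 where prox: "is_prox (fhat \<eta>) \<mu> u0 w0"
    using moreau_envelope.prox_exists[OF moreau_envelope_fhat[OF assms(1)]] by blast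
  let ?u = "u0 - u0 $ j *\<^sub>R axis j 1" and ?w = "w0 - w0 $ j *\<^sub>R axis j 1"
  have "moreau_obj (fhat \<eta>) \<mu> ?u ?w + (u0 $ j - w0 $ j)\<^sup>2 / (2 * \<mu>) \<le> moreau_obj (fhat \<eta>) \<mu> u0 w0"
    by (rule prox_fhat_zero_component[where i = i, OF assms(1,2) _ \<open>u0 $ i \<le> \<mu>\<close> prox])
      (use \<open>pos i = p\<close> \<open>p + 1 \<le> pos j\<close> in simp)
  moreover have "0 \<le> (u0 $ j - w0 $ j)\<^sup>2 / (2 * \<mu>)"
    using assms(1) by simp
  moreover have "dmu \<mu> ?u < dmu \<mu> u0"
    by (rule dmu_zero_component[OF assms(1) \<open>u0 $ j \<noteq> 0\<close>])
  moreover have "inner y ?u = inner y u0"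
    using \<open>y \<in> Esp p\<close> \<open>p + 1 \<le> pos j\<close> by (simp add: Esp_def inner_diff_right inner_axis)
  ultimately show False
    using argmin_prox_joint_min[OF assms(1) min prox, of ?u ?w] by linarith
qed

lemma ex_argmin_fmu_dmu:
  assumes "0 < \<mu>"
  shows "\<exists>u0. \<forall>u. fmu \<eta> \<mu> u0 + dmu \<mu> u0 - inner y u0 \<le> fmu \<eta> \<mu> u + dmu \<mu> u - inner y u"
proof -
  interpret moreau_envelope "fhat \<eta>" \<mu>
    by (rule moreau_envelope_fhat[OF assms])
  let ?F = "\<lambda>u. fmu \<eta> \<mu> u + dmu \<mu> u - inner y u"
  have "continuous_on UNIV ?F"
    unfolding fmu_eq_moreau_env dmu_eq_phisum
    using convex_on_continuous[OF open_UNIV convex_env] convex_on_continuous[OF open_UNIV convex_phisum[OF assms]]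
    by (intro continuous_intros)
  moreover obtain R where R: "\<forall>r. R < r \<longrightarrow> norm y * r + ?F 0 < \<mu> / 2 * r\<^sup>2"
    using quadratic_dominates_affine[of "\<mu> / 2" "norm y" "?F 0"] assms by auto
  have "?F 0 < ?F u" if "R < dist 0 u" for u
  proof -
    have "\<mu> / 2 * (norm u)\<^sup>2 - norm y * norm u \<le> ?F u"
      using env_nonneg[of u] phisum_nonneg[OF assms, of u] norm_cauchy_schwarz[of y u]
      unfolding fmu_eq_moreau_env dmu_eq_phisum by linarith
    moreover have "norm y * norm u + ?F 0 < \<mu> / 2 * (norm u)\<^sup>2"
      using R that by simp
    ultimately show ?thesis
      by linarith
  qed
  ultimately show ?thesis
    by (rule continuous_attains_min_if_coercive)
qed

lemma has_gradient_hmu: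
  assumes "0 < \<mu>" and prox: "is_prox (fhat \<eta>) \<mu> u w"
  shows "has_gradient (hmu L \<eta> \<mu>) ((1 / L) *\<^sub>R ((1 / \<mu>) *\<^sub>R (u - w) + grad_dmu \<mu> u)) u"
proof -
  interpret moreau_envelope "fhat \<eta>" \<mu>
    by (rule moreau_envelope_fhat[OF assms(1)])
  have deriv: "((\<lambda>v. 1 / L * (fmu \<eta> \<mu> v + dmu \<mu> v))
      has_derivative (\<lambda>k. 1 / L * (inner ((1 / \<mu>) *\<^sub>R (u - w)) k + inner (grad_dmu \<mu> u) k))) (at u)"
    using has_gradient_env[OF prox] has_gradient_dmu[OF assms(1), of u]
    unfolding has_gradient_def fmu_eq_moreau_env
    by (intro has_derivative_mult_right has_derivative_add)
  have hmu_eq: "hmu L \<eta> \<mu> = (\<lambda>v. 1 / L * (fmu \<eta> \<mu> v + dmu \<mu> v))"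
    by (simp add: fun_eq_iff hmu_def)
  show ?thesis
    unfolding has_gradient_def hmu_eq
    by (rule has_derivative_eq_rhs[OF deriv]) (simp add: fun_eq_iff inner_add_left)
qed

lemma has_gradient_conj_hmu:
  assumes "0 < L" and "0 < \<mu>"
    and min: "\<And>u. fmu \<eta> \<mu> u0 + dmu \<mu> u0 - inner (L *\<^sub>R x) u0 \<le> fmu \<eta> \<mu> u + dmu \<mu> u - inner (L *\<^sub>R x) u"
  shows "has_gradient (convex_conj (hmu L \<eta> \<mu>)) u0 x"
proof (rule has_gradient_convex_conj)
  interpret moreau_envelope "fhat \<eta>" \<mu>
    by (rule moreau_envelope_fhat[OF assms(2)])
  let ?F = "\<lambda>u. fmu \<eta> \<mu> u + dmu \<mu> u - inner (L *\<^sub>R x) u"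
  have "convex_on UNIV (\<lambda>u. phisum \<mu> u - inner (L *\<^sub>R x) u)"
  proof (rule convex_on_if_above_tangents)
    fix u v
    show "phisum \<mu> u - inner (L *\<^sub>R x) u + inner (grad_phisum \<mu> u - L *\<^sub>R x) (v - u) \<le> phisum \<mu> v - inner (L *\<^sub>R x) v"
      using phisum_above_tangent[OF assms(2), of u "v - u"] by (simp add: inner_diff_left inner_diff_right)
  qed
  then have "convex_on UNIV (\<lambda>u. moreau_env (fhat \<eta>) \<mu> u + (phisum \<mu> u - inner (L *\<^sub>R x) u))"
    by (rule convex_on_add[OF convex_env])
  moreover have "(\<lambda>u. ?F u - \<mu> / 2 * (norm u)\<^sup>2) = (\<lambda>u. moreau_env (fhat \<eta>) \<mu> u + (phisum \<mu> u - inner (L *\<^sub>R x) u))"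
    by (simp add: fun_eq_iff fmu_eq_moreau_env dmu_eq_phisum)
  ultimately have "convex_on UNIV (\<lambda>u. ?F u - \<mu> / 2 * (norm u)\<^sup>2)"
    by simp
  then have growth: "?F u0 + \<mu> / 2 * (norm (u - u0))\<^sup>2 \<le> ?F u" for u
    using min by (rule quadratic_growth_at_minimum)
  have hmu_eq: "hmu L \<eta> \<mu> v = ?F v / L + inner x v" for v
    using assms(1) by (simp add: hmu_def field_simps)
  fix u
  have "(?F u0 + \<mu> / 2 * (norm (u - u0))\<^sup>2) / L \<le> ?F u / L"
    using growth[of u] assms(1) by (simp add: divide_right_mono)
  moreover have "(?F u0 + \<mu> / 2 * (norm (u - u0))\<^sup>2) / L = ?F u0 / L + \<mu> / L / 2 * (norm (u - u0))\<^sup>2"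
    by (simp add: add_divide_distrib)
  ultimately show "hmu L \<eta> \<mu> u0 + inner x (u - u0) + \<mu> / L / 2 * (norm (u - u0))\<^sup>2 \<le> hmu L \<eta> \<mu> u"
    unfolding hmu_eq inner_diff_right by linarith
next
  show "0 < \<mu> / L"
    using assms by simp
qed

theorem proposition3p7:
  fixes L \<mu> \<eta> :: real and p :: nat and x :: "real^'n::{finite,linorder}"
  assumes "L > 0" and "0 < \<mu>" and "\<mu> < 1"
    and "\<eta> > 4 * \<mu> * (real CARD('n))^2"
    and "p < CARD('n)"
    and "x \<in> Esp p"
  shows "(\<exists>g. has_gradient (fmu \<eta> \<mu>) g x \<and> g \<in> Esp (p + 1))
       \<and> (\<exists>g. has_gradient (hmu L \<eta> \<mu>) g x \<and> g \<in> Esp (p + 1))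
       \<and> (\<exists>g. has_gradient (convex_conj (hmu L \<eta> \<mu>)) g x \<and> g \<in> Esp (p + 1))"
proof -
  interpret moreau_envelope "fhat \<eta>" \<mu>
    by (rule moreau_envelope_fhat[OF assms(2)])
  have x: "x \<in> Esp (p + 1)"
    using Esp_mono[of p "p + 1"] assms(6) by auto
  obtain w where prox: "is_prox (fhat \<eta>) \<mu> x w"
    using prox_exists by blast
  have grad_f: "(1 / \<mu>) *\<^sub>R (x - w) \<in> Esp (p + 1)"
    using prox_fhat_in_Esp[OF assms(2,4,5,6) prox] x subspace_Esp
    by (intro subspace_scale subspace_diff) auto
  have grad_d: "grad_dmu \<mu> x \<in> Esp (p + 1)"
    by (rule grad_dmu_in_Esp[OF assms(2) x])
  obtain u0 where min: "\<And>u. fmu \<eta> \<mu> u0 + dmu \<mu> u0 - inner (L *\<^sub>R x) u0 \<le> fmu \<eta> \<mu> u + dmu \<mu> u - inner (L *\<^sub>R x) u"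
    using ex_argmin_fmu_dmu[OF assms(2)] by blast
  have "u0 \<in> Esp (p + 1)"
    using assms(2,4,5) subspace_scale[OF subspace_Esp assms(6)] min by (rule argmin_in_Esp)
  then show ?thesis
    using has_gradient_env[OF prox] has_gradient_hmu[OF assms(2) prox] has_gradient_conj_hmu[OF assms(1,2) min]
      grad_f grad_d subspace_Esp
    unfolding fmu_eq_moreau_env by (meson subspace_add subspace_scale)
qed

end
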